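(* Fix $\lambda>0$ and let $g(\lambda) = (1-e^{-\lambda})/\lambda$. Let $\mathbb P_p$ be the set of finite point-mass probability measures on $\mathbb R$, i.e. measures $\rho = \sum_{k=1}^n a_k\delta_{x_k}$ with $n \in \mathbb N$, $x_k \in \mathbb R$, $a_k \geqslant 0$, $\sum_k a_k = 1$, and let $N_p = \{\rho\in\mathbb P_p : \langle\rho,x\rangle = 0\}$, where $\langle\rho,x\rangle = \sum_k a_kx_k$. Define $A$ on $\mathbb P_p\setminus N_p$ by $$A(\rho) = \left(1 - g(\lambda) + g(\lambda)\frac{x}{\langle \rho, x\rangle}\right)\rho = \sum_k a_k\left(1 - g(\lambda) + g(\lambda)\frac{x_k}{\langle \rho, x\rangle}\right)\delta_{x_k}.$$ Equip $\mathbb P_p\setminus N_p$ and the target with the topology in which $\rho_n \to \rho$ iff $\int\phi\,d\rho_n \to \int\phi\,d\rho$ for every continuous compactly supported $\phi\colon\mathbb R\to\mathbb R$ (the subspace topology from the space of Radon measures / generalized functions on $C_c$ with the weak topology). Then $A$ is continuous at no point of $\mathbb P_p\setminus N_p$.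
   Context: $\delta_a$ denotes the Dirac measure at $a$; $\mathbb N$ includes $0$ but here $n\geqslant 1$ is implicit since $\rho$ is a probability measure. *)

theory Defs
  imports "HOL-Analysis.Analysis"
begin

text \<open>A finite (signed) point-mass measure on the reals is represented by its weight
  function w :: real => real with finite support; it stands for the measure
  sum over x with w x nonzero of w x times the Dirac measure at x.\<close>

definition fin_support :: "(real \<Rightarrow> real) \<Rightarrow> bool" where
  "fin_support w \<longleftrightarrow> finite {x. w x \<noteq> 0}"

definition pair :: "(real \<Rightarrow> real) \<Rightarrow> (real \<Rightarrow> real) \<Rightarrow> real" where
  "pair w \<phi> = (\<Sum>x\<in>{x. w x \<noteq> 0}. w x * \<phi> x)"

definition Pp :: "(real \<Rightarrow> real) set" where
  "Pp = {w. fin_support w \<and> (\<forall>x. w x \<ge> 0) \<and> pair w (\<lambda>_. 1) = 1}"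

definition Np :: "(real \<Rightarrow> real) set" where
  "Np = {w \<in> Pp. pair w (\<lambda>x. x) = 0}"

definition Cc :: "(real \<Rightarrow> real) set" where
  "Cc = {\<phi>. continuous_on UNIV \<phi> \<and> compact (closure {x. \<phi> x \<noteq> 0})}"

definition gfun :: "real \<Rightarrow> real" where
  "gfun l = (1 - exp (- l)) / l"

definition Aop :: "real \<Rightarrow> (real \<Rightarrow> real) \<Rightarrow> (real \<Rightarrow> real)" where
  "Aop l w = (\<lambda>x. w x * (1 - gfun l + gfun l * x / pair w (\<lambda>y. y)))"

definition weak_top :: "(real \<Rightarrow> real) topology" where
  "weak_top = topology_generated_by
     {{w. pair w \<phi> \<in> U} | \<phi> U. \<phi> \<in> Cc \<and> open U}"

end

theory Submission
  imports Defs
begin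

text \<open>Move a mass e_n \<rightarrow> 0 of \<rho> to a point y_n \<rightarrow> \<infinity> chosen so that e_n y_n is the mean
  m \<noteq> 0 of \<rho>. The perturbed measures converge weakly to \<rho>, because every test function
  vanishes near infinity, but their means (2 - e_n) m tend to 2 m. Against a plateau function \<phi>
  equal to 1 on the support of \<rho> and vanishing at the y_n, the images under A therefore pair
  to a sequence with limit 1 - g/2, whereas \<langle>A \<rho>, \<phi>\<rangle> = 1.\<close>

lemma limitin_atin_subtopology_comp_sequence:
  assumes f: "limitin Y f l (atin (subtopology X S) a)" and "a \<in> S"
    and r: "\<And>n. r n \<in> S - {a}" "limitin X r a sequentially"
  shows "limitin Y (f \<circ> r) l sequentially"
  unfolding limitin_def
proof (intro conjI allI impI)
  show "l \<in> topspace Y"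
    using f by (rule limitin_topspace)
  fix V assume V: "openin Y V \<and> l \<in> V"
  have "a \<in> topspace (subtopology X S)"
    using limitin_topspace[OF r(2)] \<open>a \<in> S\<close> by simp
  with f V obtain U where U: "openin (subtopology X S) U" "a \<in> U" "\<forall>x \<in> U - {a}. f x \<in> V"
    unfolding limitin_def eventually_atin by meson
  then obtain T where T: "openin X T" "U = T \<inter> S"
    unfolding openin_subtopology by blast
  with U(2) r(2) have "eventually (\<lambda>n. r n \<in> T) sequentially"
    unfolding limitin_def by blast
  then show "eventually (\<lambda>n. (f \<circ> r) n \<in> V) sequentially"
  proof eventually_elim
    case (elim n)
    with r(1)[of n] T(2) U(3) show ?case by simp
  qed
qed

lemma pair_eq_sum_superset:
  assumes "finite F" "{x. w x \<noteq> 0} \<subseteq> F"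
  shows "pair w \<psi> = (\<Sum>x\<in>F. w x * \<psi> x)"
  unfolding pair_def by (rule sum.mono_neutral_left) (use assms in auto)

lemma pair_cong:
  assumes "\<And>x. w x \<noteq> 0 \<Longrightarrow> f x = h x"
  shows "pair w f = pair w h"
  unfolding pair_def by (rule sum.cong) (use assms in auto)

lemma pair_linear:
  "pair w (\<lambda>x. a * f x + b * h x) = a * pair w f + b * pair w h"
  unfolding pair_def by (simp add: sum.distrib sum_distrib_left algebra_simps)

lemma pair_mult_weight:
  assumes "fin_support w"
  shows "pair (\<lambda>x. w x * h x) \<psi> = pair w (\<lambda>x. h x * \<psi> x)"
proof -
  have "pair (\<lambda>x. w x * h x) \<psi> = (\<Sum>x\<in>{x. w x \<noteq> 0}. w x * h x * \<psi> x)"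
    by (rule pair_eq_sum_superset) (use assms in \<open>auto simp: fin_support_def\<close>)
  then show ?thesis
    unfolding pair_def by (simp add: mult.assoc)
qed

lemma pair_Aop:
  assumes "fin_support w"
  shows "pair (Aop l w) \<psi> = pair w (\<lambda>x. (1 - gfun l + gfun l * x / pair w (\<lambda>y. y)) * \<psi> x)"
  unfolding Aop_def by (rule pair_mult_weight[OF assms])

lemma pair_affine_on_support:
  assumes "w \<in> Pp" "\<And>x. w x \<noteq> 0 \<Longrightarrow> \<psi> x = 1"
  shows "pair w (\<lambda>x. (a + b * x / M) * \<psi> x) = a + b * pair w (\<lambda>x. x) / M"
proof -
  have "pair w (\<lambda>x. (a + b * x / M) * \<psi> x) = pair w (\<lambda>x. a * 1 + (b / M) * x)"
    by (rule pair_cong) (simp add: assms(2))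
  also have "\<dots> = a + b * pair w (\<lambda>x. x) / M"
    using assms(1) pair_linear[of w a "\<lambda>_. 1" "b / M" "\<lambda>x. x"] by (simp add: Pp_def)
  finally show ?thesis .
qed

definition mix_dirac :: "(real \<Rightarrow> real) \<Rightarrow> real \<Rightarrow> real \<Rightarrow> (real \<Rightarrow> real)" where
  "mix_dirac w e y = (\<lambda>x. (1 - e) * w x + (if x = y then e else 0))"

lemma fin_support_mix_dirac:
  assumes "fin_support w"
  shows "fin_support (mix_dirac w e y)"
proof -
  have "{x. mix_dirac w e y x \<noteq> 0} \<subseteq> insert y {x. w x \<noteq> 0}"
    by (auto simp: mix_dirac_def)
  then show ?thesis
    using assms unfolding fin_support_def by (meson finite_insert finite_subset)
qed

lemma pair_mix_dirac:
  assumes "fin_support w"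
  shows "pair (mix_dirac w e y) \<psi> = (1 - e) * pair w \<psi> + e * \<psi> y"
proof -
  let ?F = "insert y {x. w x \<noteq> 0}"
  have F: "finite ?F"
    using assms by (simp add: fin_support_def)
  have "pair (mix_dirac w e y) \<psi> = (\<Sum>x\<in>?F. (1 - e) * (w x * \<psi> x) + (if x = y then e * \<psi> y else 0))"
    by (subst pair_eq_sum_superset[OF F]) (auto simp: mix_dirac_def algebra_simps intro!: sum.cong)
  also have "\<dots> = (1 - e) * (\<Sum>x\<in>?F. w x * \<psi> x) + e * \<psi> y"
    using F by (simp add: sum.distrib sum_distrib_left)
  also have "(\<Sum>x\<in>?F. w x * \<psi> x) = pair w \<psi>"
    by (rule pair_eq_sum_superset[symmetric, OF F]) auto
  finally show ?thesis .
qed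

lemma mix_dirac_in_Pp:
  assumes "w \<in> Pp" "0 \<le> e" "e \<le> 1"
  shows "mix_dirac w e y \<in> Pp"
  using assms fin_support_mix_dirac[of w e y] pair_mix_dirac[of w e y "\<lambda>_. 1"]
  by (auto simp: Pp_def mix_dirac_def)

lemma pair_mix_dirac_mean:
  assumes "fin_support w" "e * y = pair w (\<lambda>x. x)"
  shows "pair (mix_dirac w e y) (\<lambda>x. x) = (2 - e) * pair w (\<lambda>x. x)"
  using assms by (simp add: pair_mix_dirac algebra_simps)

lemma mix_dirac_in_Pp_minus_Np:
  assumes "w \<in> Pp - Np" "0 < e" "e \<le> 1" "e * y = pair w (\<lambda>x. x)" "w y = 0"
  shows "mix_dirac w e y \<in> Pp - Np - {w}"
proof -
  have "w \<in> Pp" "pair w (\<lambda>x. x) \<noteq> 0"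
    using assms(1) by (auto simp: Np_def)
  moreover have "mix_dirac w e y y \<noteq> w y"
    using assms by (simp add: mix_dirac_def)
  ultimately show ?thesis
    using assms mix_dirac_in_Pp pair_mix_dirac_mean[of w e y]
    by (auto simp: Np_def Pp_def)
qed

lemma topspace_weak_top [simp]: "topspace weak_top = UNIV"
proof -
  have "(\<lambda>_. 0) \<in> Cc"
    by (simp add: Cc_def)
  then have "UNIV \<in> {{w. pair w \<phi> \<in> U} | \<phi> U. \<phi> \<in> Cc \<and> open U}"
    by blast
  then show ?thesis
    unfolding weak_top_def topology_generated_by_topspace by blast
qed

lemma limitin_weak_top_iff:
  "limitin weak_top s w F \<longleftrightarrow> (\<forall>\<phi>\<in>Cc. ((\<lambda>n. pair (s n) \<phi>) \<longlongrightarrow> pair w \<phi>) F)"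
proof safe
  fix \<phi> assume lim: "limitin weak_top s w F" and "\<phi> \<in> Cc"
  show "((\<lambda>n. pair (s n) \<phi>) \<longlongrightarrow> pair w \<phi>) F"
  proof (rule topological_tendstoI)
    fix U :: "real set" assume "open U" "pair w \<phi> \<in> U"
    moreover from \<open>open U\<close> \<open>\<phi> \<in> Cc\<close> have "openin weak_top {v. pair v \<phi> \<in> U}"
      unfolding weak_top_def by (intro topology_generated_by_Basis) blast
    ultimately show "eventually (\<lambda>n. pair (s n) \<phi> \<in> U) F"
      using lim unfolding limitin_def by auto
  qed
next
  assume conv: "\<forall>\<phi>\<in>Cc. ((\<lambda>n. pair (s n) \<phi>) \<longlongrightarrow> pair w \<phi>) F"
  have "eventually (\<lambda>n. s n \<in> S) F"
    if "generate_topology_on {{w. pair w \<phi> \<in> U} | \<phi> U. \<phi> \<in> Cc \<and> open U} S" "w \<in> S" for S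
    using that
  proof (induction rule: generate_topology_on.induct)
    case (Int a b)
    then show ?case by (auto intro: eventually_conj)
  next
    case (UN K)
    then obtain k where "k \<in> K" "w \<in> k" by auto
    with UN have "eventually (\<lambda>n. s n \<in> k) F" by auto
    then show ?case by eventually_elim (use \<open>k \<in> K\<close> in auto)
  next
    case (Basis S)
    then obtain \<phi> U where "S = {w. pair w \<phi> \<in> U}" "\<phi> \<in> Cc" "open U" by auto
    with Basis conv show ?case by (auto dest: topological_tendstoD)
  qed simp
  then have "eventually (\<lambda>n. s n \<in> S) F" if "openin weak_top S" "w \<in> S" for S
    using that unfolding weak_top_def openin_topology_generated_by_iff by blast
  then show "limitin weak_top s w F"
    unfolding limitin_def by simp
qed

lemma Cc_vanishes_at_infinity:
  assumes "\<phi> \<in> Cc"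
  obtains K where "\<And>x. \<bar>x\<bar> > K \<Longrightarrow> \<phi> x = 0"
proof -
  have "bounded (closure {x. \<phi> x \<noteq> 0})"
    using assms unfolding Cc_def by (simp add: compact_imp_bounded)
  then obtain K where K: "\<forall>x\<in>closure {x. \<phi> x \<noteq> 0}. norm x \<le> K"
    unfolding bounded_iff by (elim exE)
  have "\<phi> x = 0" if "\<bar>x\<bar> > K" for x
  proof (rule ccontr)
    assume "\<phi> x \<noteq> 0"
    then have "x \<in> closure {x. \<phi> x \<noteq> 0}"
      by (rule closure_subset[THEN subsetD, OF CollectI])
    with K have "\<bar>x\<bar> \<le> K"
      by simp
    with that show False
      by simp
  qed
  then show ?thesis by (rule that)
qed

lemma plateau_in_Cc: "(\<lambda>x::real. max 0 (min 1 (R + 1 - \<bar>x\<bar>))) \<in> Cc"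
proof -
  let ?\<phi> = "\<lambda>x::real. max 0 (min 1 (R + 1 - \<bar>x\<bar>))"
  have "closure {x. ?\<phi> x \<noteq> 0} \<subseteq> cball 0 (R + 1)"
    by (rule closure_minimal) auto
  then have "compact (closure {x. ?\<phi> x \<noteq> 0})"
    by (meson bounded_cball bounded_subset closed_closure compact_eq_bounded_closed)
  moreover have "continuous_on UNIV ?\<phi>"
    by (intro continuous_intros)
  ultimately show ?thesis
    unfolding Cc_def by simp
qed

lemma fin_support_plateau:
  assumes "fin_support w"
  obtains \<psi> R where "\<psi> \<in> Cc" "\<And>x. w x \<noteq> 0 \<Longrightarrow> \<psi> x = 1" "\<And>x. \<bar>x\<bar> > R \<Longrightarrow> \<psi> x = 0"
proof -
  obtain R where R: "\<And>x. w x \<noteq> 0 \<Longrightarrow> \<bar>x\<bar> \<le> R"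
    using finite_imp_bounded[of "{x. w x \<noteq> 0}"] assms by (auto simp: fin_support_def bounded_iff)
  show ?thesis
  proof (rule that[of "\<lambda>x. max 0 (min 1 (R + 1 - \<bar>x\<bar>))" "R + 1"])
    show "(\<lambda>x. max 0 (min 1 (R + 1 - \<bar>x\<bar>))) \<in> Cc"
      by (rule plateau_in_Cc)
  qed (use R in auto)
qed

lemma mix_dirac_escaping_weakly_tendsto:
  assumes "fin_support w" "e \<longlonglongrightarrow> 0" "filterlim (\<lambda>n. \<bar>y n\<bar>) at_top sequentially"
  shows "limitin weak_top (\<lambda>n. mix_dirac w (e n) (y n)) w sequentially"
  unfolding limitin_weak_top_iff
proof
  fix \<phi> assume "\<phi> \<in> Cc"
  then obtain K where K: "\<And>x. \<bar>x\<bar> > K \<Longrightarrow> \<phi> x = 0"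
    by (meson Cc_vanishes_at_infinity)
  have "eventually (\<lambda>n. \<bar>y n\<bar> > K) sequentially"
    using assms(3) by (rule filterlim_at_top_dense[THEN iffD1, rule_format])
  then have "eventually (\<lambda>n. (1 - e n) * pair w \<phi> = pair (mix_dirac w (e n) (y n)) \<phi>) sequentially"
    by eventually_elim (simp add: pair_mix_dirac[OF assms(1)] K)
  moreover have "(\<lambda>n. (1 - e n) * pair w \<phi>) \<longlonglongrightarrow> (1 - 0) * pair w \<phi>"
    by (intro tendsto_intros assms(2))
  ultimately show "(\<lambda>n. pair (mix_dirac w (e n) (y n)) \<phi>) \<longlonglongrightarrow> pair w \<phi>"
    by (simp add: Lim_transform_eventually)
qed

lemma escaping_sequence:
  fixes m R :: real
  assumes "m \<noteq> 0"
  obtains e y :: "nat \<Rightarrow> real"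
  where "e \<longlonglongrightarrow> 0" "\<And>n. 0 < e n" "\<And>n. e n \<le> 1" "\<And>n. e n * y n = m" "\<And>n. \<bar>y n\<bar> > R"
    "filterlim (\<lambda>n. \<bar>y n\<bar>) at_top sequentially"
proof -
  define t where "t n = (\<bar>R\<bar> + \<bar>m\<bar> + 1) + real n" for n
  have t_pos: "t n > 0" for n
    unfolding t_def by (simp add: add_nonneg_pos)
  have t_top: "filterlim t at_top sequentially"
    unfolding t_def by (intro filterlim_tendsto_add_at_top[OF tendsto_const] filterlim_real_sequentially)
  show ?thesis
  proof
    show "(\<lambda>n. \<bar>m\<bar> / t n) \<longlonglongrightarrow> 0"
      by (rule tendsto_divide_0[OF tendsto_const filterlim_at_top_imp_at_infinity[OF t_top]])
    show "\<bar>m\<bar> / t n * (sgn m * t n) = m" for n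
      using t_pos[of n] by (simp add: abs_mult_sgn)
    show "\<bar>m\<bar> / t n \<le> 1" for n
      using t_pos[of n] by (simp add: t_def)
    show "filterlim (\<lambda>n. \<bar>sgn m * t n\<bar>) at_top sequentially"
      using t_top t_pos assms by (simp add: abs_mult less_imp_le)
  qed (use t_pos assms in \<open>auto simp: abs_mult t_def\<close>)
qed

lemma pair_Aop_on_support:
  assumes "w \<in> Pp - Np" "\<And>x. w x \<noteq> 0 \<Longrightarrow> \<psi> x = 1"
  shows "pair (Aop l w) \<psi> = 1"
proof -
  have "w \<in> Pp" "fin_support w" "pair w (\<lambda>x. x) \<noteq> 0"
    using assms(1) by (auto simp: Pp_def Np_def)
  then show ?thesis
    using assms(2) by (simp add: pair_Aop pair_affine_on_support)
qed

lemma pair_Aop_mix_dirac: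
  assumes "w \<in> Pp - Np" "\<And>x. w x \<noteq> 0 \<Longrightarrow> \<psi> x = 1" "\<psi> y = 0" "e * y = pair w (\<lambda>x. x)"
  shows "pair (Aop l (mix_dirac w e y)) \<psi> = (1 - e) * (1 - gfun l + gfun l / (2 - e))"
proof -
  have w: "w \<in> Pp" "fin_support w" "pair w (\<lambda>x. x) \<noteq> 0"
    using assms(1) by (auto simp: Pp_def Np_def)
  then have "pair (Aop l (mix_dirac w e y)) \<psi>
      = (1 - e) * (1 - gfun l + gfun l * pair w (\<lambda>x. x) / ((2 - e) * pair w (\<lambda>x. x)))"
    unfolding pair_Aop[OF fin_support_mix_dirac[OF w(2)]] pair_mix_dirac_mean[OF w(2) assms(4)]
    using assms(2,3) by (simp add: pair_mix_dirac pair_affine_on_support)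
  with w(3) show ?thesis
    by simp
qed

lemma gfun_pos: "l > 0 \<Longrightarrow> gfun l > 0"
  by (simp add: gfun_def)

theorem proposition1:
  fixes l :: real and \<rho> :: "real \<Rightarrow> real"
  assumes "l > 0" and "\<rho> \<in> Pp - Np"
  shows "\<not> limitin weak_top (Aop l) (Aop l \<rho>) (atin (subtopology weak_top (Pp - Np)) \<rho>)"
proof
  assume lim: "limitin weak_top (Aop l) (Aop l \<rho>) (atin (subtopology weak_top (Pp - Np)) \<rho>)"
  have fin: "fin_support \<rho>" and "pair \<rho> (\<lambda>x. x) \<noteq> 0"
    using assms(2) by (auto simp: Pp_def Np_def)
  obtain \<phi> R where \<phi>: "\<phi> \<in> Cc" "\<And>x. \<rho> x \<noteq> 0 \<Longrightarrow> \<phi> x = 1" "\<And>x. \<bar>x\<bar> > R \<Longrightarrow> \<phi> x = 0"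
    using fin_support_plateau[OF fin] by blast
  obtain e y
    where e: "e \<longlonglongrightarrow> 0" "\<And>n. 0 < e n" "\<And>n. e n \<le> 1" "\<And>n. e n * y n = pair \<rho> (\<lambda>x. x)"
    and y: "\<And>n. \<bar>y n\<bar> > R" "filterlim (\<lambda>n. \<bar>y n\<bar>) at_top sequentially"
    using escaping_sequence[OF \<open>pair \<rho> (\<lambda>x. x) \<noteq> 0\<close>] by blast
  have y_out: "\<rho> (y n) = 0" "\<phi> (y n) = 0" for n
    using \<phi>(2,3) y(1)[of n] by force+
  define r where "r = (\<lambda>n. mix_dirac \<rho> (e n) (y n))"
  have "limitin weak_top (Aop l \<circ> r) (Aop l \<rho>) sequentially"
    using lim assms(2) mix_dirac_in_Pp_minus_Np[OF assms(2) e(2-4) y_out(1)]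
      mix_dirac_escaping_weakly_tendsto[OF fin e(1) y(2)]
    by (intro limitin_atin_subtopology_comp_sequence) (auto simp: r_def)
  then have "(\<lambda>n. (1 - e n) * (1 - gfun l + gfun l / (2 - e n))) \<longlonglongrightarrow> 1"
    using \<phi>(1) pair_Aop_on_support[of \<rho> \<phi>, OF assms(2) \<phi>(2)]
      pair_Aop_mix_dirac[of \<rho> \<phi>, OF assms(2) \<phi>(2) y_out(2) e(4)]
    by (auto simp: limitin_weak_top_iff r_def)
  moreover have "(\<lambda>n. (1 - e n) * (1 - gfun l + gfun l / (2 - e n)))
      \<longlonglongrightarrow> (1 - 0) * (1 - gfun l + gfun l / (2 - 0))"
    by (intro tendsto_intros e(1)) simp_all
  ultimately have "1 = (1 - 0) * (1 - gfun l + gfun l / (2 - 0))"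
    by (rule LIMSEQ_unique)
  with gfun_pos[OF \<open>l > 0\<close>] show False
    by simp
qed

end
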